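(* Let $Q$ be the law on $\mathbb{D}^\infty$ of a sequence of independent random variables, each with a rotation-invariant law on $\mathbb{D}$, and let $\mathrm{d}\mathbb{P}(\boldsymbol{\alpha},\theta)=\mathrm{d}Q(\boldsymbol{\alpha})\,\mathrm{d}\mu_{\boldsymbol{\alpha}}(\theta)$. For each fixed $\lambda\in\partial\mathbb{D}$, the measure $\mathbb{P}$ is invariant under the transformation \[ \big((\alpha_n)_{n\ge0},e^{i\theta}\big)\mapsto\big((\lambda^{n+1}\alpha_n)_{n\ge0},\overline{\lambda}e^{i\theta}\big). \]
   Context: For $\boldsymbol{\alpha}\in\mathbb{D}^\infty$, $\mu_{\boldsymbol{\alpha}}$ is the unique probability measure on $\partial\mathbb{D}$ whose monic orthogonal polynomials satisfy $\Phi_0=1$, $\Phi_{n+1}(z)=z\Phi_n(z)-\overline{\alpha_n}\Phi_n^*(z)$ with $P^*(z)=z^n\overline{P(1/\bar z)}$ for $\deg P=n$. $\mathbb{P}$ is the measure on $\mathbb{D}^\infty\times\partial\mathbb{D}$ with $\mathbb{P}(A\times B)=\mathbb{E}_Q[\mu_{\boldsymbol{\alpha}}(B)\mathbf{1}_{\{\boldsymbol{\alpha}\in A\}}]$. *)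

theory Defs
  imports "HOL-Probability.Probability" "HOL-Computational_Algebra.Polynomial"
begin

text \<open>Reversed polynomial P* (z) = z^n conj(P(1/conj z)) for a polynomial regarded as
  having degree n: the coefficient of z^k is conj(coeff P (n-k)).\<close>
definition pstar :: "nat \<Rightarrow> complex poly \<Rightarrow> complex poly" where
  "pstar n p = (\<Sum>k\<le>n. monom (cnj (coeff p (n - k))) k)"

fun opuc :: "(nat \<Rightarrow> complex) \<Rightarrow> nat \<Rightarrow> complex poly" where
  "opuc \<alpha> 0 = 1"
| "opuc \<alpha> (Suc n) = pCons 0 (opuc \<alpha> n) - smult (cnj (\<alpha> n)) (pstar n (opuc \<alpha> n))"

definition is_opuc_measure :: "(nat \<Rightarrow> complex) \<Rightarrow> complex measure \<Rightarrow> bool" where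
  "is_opuc_measure \<alpha> \<mu> \<longleftrightarrow>
     sets \<mu> = sets borel \<and> prob_space \<mu> \<and> emeasure \<mu> (sphere 0 1) = 1 \<and>
     (\<forall>n. \<forall>k<n. (\<integral>z. poly (opuc \<alpha> n) z * cnj (z ^ k) \<partial>\<mu>) = 0)"

definition mu_alpha :: "(nat \<Rightarrow> complex) \<Rightarrow> complex measure" where
  "mu_alpha \<alpha> = (THE \<mu>. is_opuc_measure \<alpha> \<mu>)"

text \<open>The underlying measurable space of pairs (alpha, e^{i theta}).\<close>
definition seq_circ_space :: "((nat \<Rightarrow> complex) \<times> complex) measure" where
  "seq_circ_space = (\<Pi>\<^sub>M n\<in>UNIV. (borel :: complex measure)) \<Otimes>\<^sub>M (borel :: complex measure)"

definition joint_P :: "(nat \<Rightarrow> complex) measure \<Rightarrow> ((nat \<Rightarrow> complex) \<times> complex) measure" where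
  "joint_P Q = measure_of (space seq_circ_space) (sets seq_circ_space)
      (\<lambda>S. \<integral>\<^sup>+ \<alpha>. emeasure (mu_alpha \<alpha>) (Pair \<alpha> -` S) \<partial>Q)"

end

(*
  Write a' for the rotated coefficients a'_n = l^(n+1) a_n.  Induction along the Szego recursion
  gives Phi_n^(a')(z) = conj(l)^n Phi_n^(a)(l z), so the image of mu_a under z |-> conj(l) z satisfies
  the orthogonality relations of a'.  These relations have exactly one solution for every a in the
  open polydisc.  Uniqueness: they determine the moments of the measure recursively, and moments
  determine a probability measure on the circle (Stone-Weierstrass).  Existence (Verblunsky's
  theorem): the normalised Bernstein-Szego measures |Phi*_N|^(-2) dtheta already have
  Phi_0, ..., Phi_N as orthogonal polynomials, which follows from Cauchy's theorem at degree N and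
  the inverse Szego recursion below it, and a weak limit point (Helly) solves all relations.
  Hence mu_(a') is the rotation of mu_a for Q-almost every a.  Finally Q is invariant under a |-> a'
  because every a_n has a rotation-invariant law, and a measure-preserving bijection preserves the
  lower integral of an arbitrary, possibly non-measurable, function, which is the integral defining P.
*)
theory Submission
  imports Defs "HOL-Complex_Analysis.Complex_Analysis"
begin

section \<open>Reversed polynomials and the Szego recursion\<close>

lemma unit_mult_cnj: "cmod z = 1 \<Longrightarrow> z * cnj z = 1"
  using complex_norm_square[of z] by simp

lemma unit_cnj_eq_inverse: "cmod z = 1 \<Longrightarrow> cnj z = inverse z"
  using unit_mult_cnj inverse_unique by metis

lemma poly_altdef_le:
  fixes p :: "'a::comm_semiring_1 poly"
  assumes "degree p \<le> n"
  shows "poly p x = (\<Sum>k\<le>n. coeff p k * x ^ k)"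
proof -
  have "poly p x = poly (\<Sum>k\<le>n. monom (coeff p k) k) x"
    by (simp only: poly_as_sum_of_monoms'[OF assms])
  then show ?thesis
    by (simp add: poly_sum poly_monom)
qed

lemma coeff_pstar: "coeff (pstar n p) k = (if k \<le> n then cnj (coeff p (n - k)) else 0)"
  unfolding pstar_def by (auto simp: coeff_sum coeff_monom)

lemma degree_pstar: "degree (pstar n p) \<le> n"
  by (rule degree_le) (auto simp: coeff_pstar)

lemma pstar_diff: "pstar n (p - q) = pstar n p - pstar n q"
  by (rule poly_eqI) (simp add: coeff_pstar)

lemma pstar_smult: "pstar n (smult c p) = smult (cnj c) (pstar n p)"
  by (rule poly_eqI) (simp add: coeff_pstar)

lemma pstar_Suc_pCons_0: "pstar (Suc n) (pCons 0 p) = pstar n p"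
  by (rule poly_eqI) (auto simp: coeff_pstar coeff_pCons Suc_diff_le split: nat.split)

lemma pstar_Suc_pstar:
  assumes "degree p \<le> n"
  shows "pstar (Suc n) (pstar n p) = pCons 0 p"
proof (rule poly_eqI)
  fix k
  show "coeff (pstar (Suc n) (pstar n p)) k = coeff (pCons 0 p) k"
    using assms by (cases k) (auto simp: coeff_pstar coeff_eq_0)
qed

lemma poly_pstar_circle:
  assumes "degree p \<le> n" "cmod z = 1"
  shows "poly (pstar n p) z = z ^ n * cnj (poly p z)"
proof -
  have z0: "z \<noteq> 0"
    using assms(2) by auto
  have "z ^ n * cnj (poly p z) = (\<Sum>k\<le>n. cnj (coeff p k) * (z ^ n * inverse (z ^ k)))"
    by (simp add: poly_altdef_le[OF assms(1)] unit_cnj_eq_inverse[OF assms(2)] power_inverse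
        sum_distrib_left mult_ac)
  also have "\<dots> = (\<Sum>k\<le>n. cnj (coeff p k) * z ^ (n - k))"
    by (intro sum.cong refl) (simp add: power_diff z0 divide_inverse)
  also have "\<dots> = (\<Sum>k\<le>n. cnj (coeff p (n - k)) * z ^ k)"
    by (rule sum.reindex_bij_witness[where i="\<lambda>k. n - k" and j="\<lambda>k. n - k"]) auto
  also have "\<dots> = poly (pstar n p) z"
    by (simp add: pstar_def poly_sum poly_monom)
  finally show ?thesis ..
qed

lemma degree_opuc: "degree (opuc a n) \<le> n"
proof (induction n)
  case (Suc n)
  then have "degree (pCons 0 (opuc a n)) \<le> Suc n"
    by (metis degree_pCons_le le_trans Suc_le_mono)
  moreover have "degree (smult (cnj (a n)) (pstar n (opuc a n))) \<le> Suc n"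
    using degree_pstar[of n] degree_smult_le le_SucI order_trans by metis
  ultimately show ?case
    by (simp add: degree_diff_le)
qed simp

lemma coeff_opuc_self: "coeff (opuc a n) n = 1"
  by (induction n) (auto simp: coeff_pstar)

lemma pstar_opuc_Suc:
  "pstar (Suc n) (opuc a (Suc n)) = pstar n (opuc a n) - smult (a n) (pCons 0 (opuc a n))"
  by (simp add: pstar_diff pstar_smult pstar_Suc_pCons_0 pstar_Suc_pstar degree_opuc degree_pstar)

lemma poly_pstar_opuc_Suc:
  "poly (pstar (Suc n) (opuc a (Suc n))) z = poly (pstar n (opuc a n)) z - a n * z * poly (opuc a n) z"
  unfolding pstar_opuc_Suc by simp

lemma poly_opuc_Suc_add_pstar:
  "poly (opuc a (Suc n)) z + cnj (a n) * poly (pstar (Suc n) (opuc a (Suc n))) z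
     = (1 - a n * cnj (a n)) * (z * poly (opuc a n) z)"
  unfolding poly_pstar_opuc_Suc by (simp add: algebra_simps)

lemma poly_pstar_Suc_add_opuc:
  "poly (pstar (Suc n) (opuc a (Suc n))) z + a n * poly (opuc a (Suc n)) z
     = (1 - a n * cnj (a n)) * poly (pstar n (opuc a n)) z"
  unfolding poly_pstar_opuc_Suc by (simp add: algebra_simps)

lemma Szego_step_bound:
  fixes a s x z :: complex
  assumes a: "cmod a < 1" and s: "s \<noteq> 0" and x: "cmod x \<le> cmod s" and z: "cmod z \<le> 1"
  shows "s - a * x \<noteq> 0" and "cmod (z * (x - cnj a * s)) \<le> cmod (s - a * x)"
proof -
  have "cmod (a * x) \<le> cmod a * cmod s"
    using x by (simp add: norm_mult mult_left_mono)
  also have "\<dots> < cmod s"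
    using a s by simp
  finally show "s - a * x \<noteq> 0"
    by auto
  have identity: "(cmod (s - a * x))\<^sup>2 - (cmod (x - cnj a * s))\<^sup>2
      = (1 - (cmod a)\<^sup>2) * ((cmod s)\<^sup>2 - (cmod x)\<^sup>2)"
    unfolding cmod_power2 by (simp add: algebra_simps power2_eq_square)
  have "0 \<le> (1 - (cmod a)\<^sup>2) * ((cmod s)\<^sup>2 - (cmod x)\<^sup>2)"
    using a x by (intro mult_nonneg_nonneg) (simp_all add: abs_square_le_1 power_mono)
  then have "(cmod (x - cnj a * s))\<^sup>2 \<le> (cmod (s - a * x))\<^sup>2"
    using identity by linarith
  then have "cmod (x - cnj a * s) \<le> cmod (s - a * x)"
    by (rule power2_le_imp_le) simp
  moreover have "cmod (z * (x - cnj a * s)) \<le> cmod (x - cnj a * s)"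
    using z by (simp add: norm_mult mult_left_le_one_le)
  ultimately show "cmod (z * (x - cnj a * s)) \<le> cmod (s - a * x)"
    by linarith
qed

lemma poly_pstar_opuc_nonzero:
  assumes a: "\<And>j. j < n \<Longrightarrow> cmod (a j) < 1" and z: "cmod z \<le> 1"
  shows "poly (pstar n (opuc a n)) z \<noteq> 0"
proof -
  have "poly (pstar n (opuc a n)) z \<noteq> 0 \<and> cmod (z * poly (opuc a n) z) \<le> cmod (poly (pstar n (opuc a n)) z)"
    using a
  proof (induction n)
    case 0
    then show ?case
      using z by (simp add: pstar_def)
  next
    case (Suc n)
    define s x where "s = poly (pstar n (opuc a n)) z" and "x = z * poly (opuc a n) z"
    have "s \<noteq> 0" "cmod x \<le> cmod s"
      using Suc.IH Suc.prems by (simp_all add: s_def x_def)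
    moreover have "cmod (a n) < 1"
      using Suc.prems by simp
    ultimately have "s - a n * x \<noteq> 0 \<and> cmod (z * (x - cnj (a n) * s)) \<le> cmod (s - a n * x)"
      using Szego_step_bound[of "a n" s x z] z by blast
    moreover have "poly (pstar (Suc n) (opuc a (Suc n))) z = s - a n * x"
      unfolding s_def x_def poly_pstar_opuc_Suc by (simp add: mult.assoc)
    moreover have "poly (opuc a (Suc n)) z = x - cnj (a n) * s"
      by (simp add: s_def x_def)
    ultimately show ?case
      by (simp del: opuc.simps)
  qed
  then show ?thesis ..
qed

section \<open>Probability measures on the unit circle\<close>

locale circle_distribution = prob_space M for M :: "complex measure" +
  assumes events_eq_borel [simp, measurable_cong]: "sets M = sets borel"
    and emeasure_sphere: "emeasure M (sphere 0 1) = 1"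
begin

lemma space_eq_UNIV [simp]: "space M = UNIV"
  using sets_eq_imp_space_eq[OF events_eq_borel] by simp

lemma AE_circle: "AE z in M. cmod z = 1"
proof -
  have "AE z in M. z \<in> sphere 0 1"
    using AE_in_set_eq_1[of "sphere 0 1"] emeasure_sphere by (simp add: emeasure_eq_measure)
  then show ?thesis
    by simp
qed

lemma borel_measurable_continuous:
  "continuous_on UNIV f \<Longrightarrow> f \<in> borel_measurable M"
  by (simp add: measurable_cong_sets[OF events_eq_borel refl] borel_measurable_continuous_onI)

lemma integrable_continuous:
  fixes f :: "complex \<Rightarrow> 'b::{banach, second_countable_topology}"
  assumes f: "continuous_on UNIV f"
  shows "integrable M f"
proof -
  have "compact (f ` sphere 0 1)"
    by (rule compact_continuous_image) (use f continuous_on_subset in auto)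
  then obtain B where B: "\<And>z. z \<in> sphere 0 1 \<Longrightarrow> norm (f z) \<le> B"
    by (meson bounded_iff compact_imp_bounded image_eqI)
  have "AE z in M. norm (f z) \<le> B"
    using AE_circle by eventually_elim (simp add: B)
  then show ?thesis
    using borel_measurable_continuous[OF f] by (intro integrable_const_bound)
qed

lemma integral_cong_circle:
  assumes "continuous_on UNIV f" "continuous_on UNIV g" "\<And>z. cmod z = 1 \<Longrightarrow> f z = g z"
  shows "integral\<^sup>L M f = integral\<^sup>L M g"
  using assms AE_circle
  by (intro integral_cong_AE borel_measurable_continuous) (auto elim: AE_mp)

lemma abs_integral_le:
  fixes h :: "complex \<Rightarrow> real"
  assumes h: "continuous_on UNIV h" and bound: "\<And>z. cmod z = 1 \<Longrightarrow> \<bar>h z\<bar> \<le> e"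
  shows "\<bar>\<integral>z. h z \<partial>M\<bar> \<le> e"
proof -
  have "\<bar>\<integral>z. h z \<partial>M\<bar> \<le> (\<integral>z. \<bar>h z\<bar> \<partial>M)"
    using integral_norm_bound[of M h] by simp
  also have "\<dots> \<le> e"
    using AE_circle bound h
    by (intro integral_le_const integrable_continuous continuous_intros) (auto elim: AE_mp)
  finally show ?thesis .
qed

lemma integral_power_mult_cnj_power:
  "(\<integral>z. z ^ j * cnj z ^ k \<partial>M) =
     (if k \<le> j then (\<integral>z. z ^ (j - k) \<partial>M) else cnj (\<integral>z. z ^ (k - j) \<partial>M))"
proof (cases "k \<le> j")
  case True
  have "(\<integral>z. z ^ j * cnj z ^ k \<partial>M) = (\<integral>z. z ^ (j - k) \<partial>M)"
  proof (rule integral_cong_circle)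
    fix z :: complex
    assume "cmod z = 1"
    then have "z ^ j * cnj z ^ k = z ^ (j - k) * (z * cnj z) ^ k"
      using True by (simp add: power_mult_distrib mult_ac flip: power_add)
    then show "z ^ j * cnj z ^ k = z ^ (j - k)"
      using unit_mult_cnj[OF \<open>cmod z = 1\<close>] by simp
  qed (intro continuous_intros)+
  then show ?thesis
    using True by simp
next
  case False
  have "(\<integral>z. z ^ j * cnj z ^ k \<partial>M) = (\<integral>z. cnj (z ^ (k - j)) \<partial>M)"
  proof (rule integral_cong_circle)
    fix z :: complex
    assume "cmod z = 1"
    then have "z ^ j * cnj z ^ k = cnj z ^ (k - j) * (z * cnj z) ^ j"
      using False by (simp add: power_mult_distrib mult_ac flip: power_add)
    then show "z ^ j * cnj z ^ k = cnj (z ^ (k - j))"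
      using unit_mult_cnj[OF \<open>cmod z = 1\<close>] by simp
  qed (intro continuous_intros)+
  then show ?thesis
    using False by (simp del: complex_cnj_power)
qed

lemma circle_distribution_distr_mult:
  assumes c: "cmod c = 1"
  shows "circle_distribution (distr M borel (\<lambda>z. c * z))"
proof -
  have meas: "(\<lambda>z. c * z) \<in> measurable M borel"
    by (intro borel_measurable_continuous continuous_intros)
  interpret rotated: prob_space "distr M borel (\<lambda>z. c * z)"
    by (rule prob_space_distr[OF meas])
  have "(\<lambda>z. c * z) -` sphere 0 1 = sphere 0 1"
    using c by (auto simp: norm_mult)
  then show ?thesis
    by unfold_locales (simp_all add: emeasure_distr[OF meas] emeasure_sphere)
qed

end

lemma is_opuc_measure_iff:
  "is_opuc_measure a \<mu> \<longleftrightarrow> circle_distribution \<mu> \<and>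
     (\<forall>n k. k < n \<longrightarrow> (\<integral>z. poly (opuc a n) z * cnj (z ^ k) \<partial>\<mu>) = 0)"
  unfolding is_opuc_measure_def circle_distribution_def circle_distribution_axioms_def by auto

section \<open>Rotating the Verblunsky coefficients\<close>

lemma unit_power_mult_cnj_power:
  assumes "cmod l = 1" "k \<le> n"
  shows "l ^ n * cnj l ^ (n - k) = l ^ k"
proof -
  have "l ^ n * cnj l ^ (n - k) = l ^ k * (l * cnj l) ^ (n - k)"
    using assms(2) by (simp add: power_mult_distrib flip: power_add mult.assoc)
  then show ?thesis
    using unit_mult_cnj[OF assms(1)] by simp
qed

definition rotate_verblunsky :: "complex \<Rightarrow> (nat \<Rightarrow> complex) \<Rightarrow> nat \<Rightarrow> complex" where
  "rotate_verblunsky l a n = l ^ Suc n * a n"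

lemma rotate_verblunsky_cnj:
  assumes "cmod l = 1"
  shows "rotate_verblunsky (cnj l) (rotate_verblunsky l a) = a"
proof
  fix n
  have "cnj l ^ Suc n * l ^ Suc n = (l * cnj l) ^ Suc n"
    by (simp only: power_mult_distrib mult.commute)
  also have "\<dots> = 1"
    using unit_mult_cnj[OF assms] by simp
  finally have "cnj l ^ Suc n * l ^ Suc n = 1" .
  then show "rotate_verblunsky (cnj l) (rotate_verblunsky l a) n = a n"
    unfolding rotate_verblunsky_def by (simp flip: mult.assoc)
qed

lemma rotate_verblunsky_eq: "rotate_verblunsky l = (\<lambda>a n. l ^ Suc n * a n)"
  by (simp add: fun_eq_iff rotate_verblunsky_def)

lemma coeff_opuc_rotate:
  assumes l: "cmod l = 1"
  shows "coeff (opuc (rotate_verblunsky l a) n) k = cnj l ^ n * l ^ k * coeff (opuc a n) k"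
proof (induction n arbitrary: k)
  case 0
  then show ?case
    by (cases k) (simp_all add: coeff_1)
next
  case (Suc n)
  let ?b = "rotate_verblunsky l a"
  have lc: "l * cnj l = 1"
    using unit_mult_cnj[OF l] .
  have shift: "coeff (pCons 0 (opuc ?b n)) k = cnj l ^ Suc n * l ^ k * coeff (pCons 0 (opuc a n)) k"
  proof (cases k)
    case (Suc j)
    have "cnj l ^ n * l ^ j = cnj l ^ Suc n * l ^ Suc j"
      using lc by (simp add: mult_ac)
    then show ?thesis
      using Suc.IH[of j] Suc by (simp add: coeff_pCons)
  qed simp
  have reversed: "cnj (?b n) * coeff (pstar n (opuc ?b n)) k
      = cnj l ^ Suc n * l ^ k * (cnj (a n) * coeff (pstar n (opuc a n)) k)"
  proof (cases "k \<le> n")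
    case True
    have "cnj (?b n) * coeff (pstar n (opuc ?b n)) k
        = cnj (l ^ Suc n) * cnj (a n) * cnj (coeff (opuc ?b n) (n - k))"
      using True by (simp add: coeff_pstar rotate_verblunsky_def)
    also have "\<dots> = cnj l ^ Suc n * (l ^ n * cnj l ^ (n - k)) * (cnj (a n) * cnj (coeff (opuc a n) (n - k)))"
      by (simp add: Suc.IH mult_ac)
    also have "\<dots> = cnj l ^ Suc n * l ^ k * (cnj (a n) * coeff (pstar n (opuc a n)) k)"
      using True by (simp add: coeff_pstar unit_power_mult_cnj_power[OF l])
    finally show ?thesis .
  qed (simp add: coeff_pstar)
  show ?case
    by (simp only: opuc.simps coeff_diff coeff_smult shift reversed) (simp add: algebra_simps)
qed

lemma poly_opuc_rotate:
  assumes l: "cmod l = 1"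
  shows "poly (opuc (rotate_verblunsky l a) n) z = cnj l ^ n * poly (opuc a n) (l * z)"
  by (simp add: poly_altdef_le[OF degree_opuc] coeff_opuc_rotate[OF l] sum_distrib_left
      power_mult_distrib mult_ac)

lemma is_opuc_measure_rotate:
  assumes l: "cmod l = 1" and \<mu>: "is_opuc_measure a \<mu>"
  shows "is_opuc_measure (rotate_verblunsky l a) (distr \<mu> borel (\<lambda>z. cnj l * z))"
proof -
  interpret circle_distribution \<mu>
    using \<mu> by (simp add: is_opuc_measure_iff)
  have orth: "\<And>n k. k < n \<Longrightarrow> (\<integral>z. poly (opuc a n) z * cnj (z ^ k) \<partial>\<mu>) = 0"
    using \<mu> by (simp add: is_opuc_measure_iff)
  have meas: "(\<lambda>z. cnj l * z) \<in> measurable \<mu> borel"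
    by (intro borel_measurable_continuous continuous_intros)
  have "(\<integral>z. poly (opuc (rotate_verblunsky l a) n) z * cnj (z ^ k) \<partial>distr \<mu> borel (\<lambda>z. cnj l * z)) = 0"
    if "k < n" for n k
  proof -
    have "(\<integral>z. poly (opuc (rotate_verblunsky l a) n) z * cnj (z ^ k) \<partial>distr \<mu> borel (\<lambda>z. cnj l * z))
        = (\<integral>z. poly (opuc (rotate_verblunsky l a) n) (cnj l * z) * cnj ((cnj l * z) ^ k) \<partial>\<mu>)"
      by (rule integral_distr[OF meas]) (intro borel_measurable_continuous_onI continuous_intros)
    also have "\<dots> = (\<integral>z. (cnj l ^ n * l ^ k) * (poly (opuc a n) z * cnj (z ^ k)) \<partial>\<mu>)"
    proof (rule Bochner_Integration.integral_cong[OF refl])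
      fix z
      have "l * (cnj l * z) = z"
        using unit_mult_cnj[OF l] by (simp flip: mult.assoc)
      then show "poly (opuc (rotate_verblunsky l a) n) (cnj l * z) * cnj ((cnj l * z) ^ k)
          = (cnj l ^ n * l ^ k) * (poly (opuc a n) z * cnj (z ^ k))"
        unfolding poly_opuc_rotate[OF l] \<open>l * (cnj l * z) = z\<close> by (simp add: power_mult_distrib mult_ac)
    qed
    also have "\<dots> = 0"
      using orth[OF that] by simp
    finally show ?thesis .
  qed
  then show ?thesis
    using circle_distribution_distr_mult[of "cnj l"] l by (simp add: is_opuc_measure_iff)
qed

section \<open>A measure on the circle is determined by its moments\<close>

inductive zcnj_polynomial :: "(complex \<Rightarrow> complex) \<Rightarrow> bool" where
  monomial: "zcnj_polynomial (\<lambda>z. c * (z ^ j * cnj z ^ k))"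
| add: "zcnj_polynomial f \<Longrightarrow> zcnj_polynomial g \<Longrightarrow> zcnj_polynomial (\<lambda>z. f z + g z)"

lemma zcnj_polynomial_continuous: "zcnj_polynomial f \<Longrightarrow> continuous_on UNIV f"
  by (induction rule: zcnj_polynomial.induct) (intro continuous_intros)+

lemma zcnj_polynomial_mult_monomial:
  "zcnj_polynomial f \<Longrightarrow> zcnj_polynomial (\<lambda>z. f z * (c * (z ^ j * cnj z ^ k)))"
proof (induction rule: zcnj_polynomial.induct)
  case (monomial c' j' k')
  have "zcnj_polynomial (\<lambda>z. (c' * c) * (z ^ (j' + j) * cnj z ^ (k' + k)))"
    by (rule zcnj_polynomial.monomial)
  then show ?case
    by (simp add: power_add mult_ac)
next
  case (add f g)
  then show ?case
    using zcnj_polynomial.add[OF add.IH] by (simp add: distrib_right)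
qed

lemma zcnj_polynomial_mult:
  assumes "zcnj_polynomial f" "zcnj_polynomial g"
  shows "zcnj_polynomial (\<lambda>z. f z * g z)"
  using assms(2)
proof (induction rule: zcnj_polynomial.induct)
  case (add g h)
  then show ?case
    using zcnj_polynomial.add[OF add.IH] by (simp add: distrib_left)
qed (rule zcnj_polynomial_mult_monomial[OF assms(1)])

lemma zcnj_polynomial_const: "zcnj_polynomial (\<lambda>z. c)"
  using zcnj_polynomial.monomial[of c 0 0] by simp

lemma zcnj_polynomial_of_real:
  fixes g :: "complex \<Rightarrow> real"
  assumes "real_polynomial_function g"
  shows "zcnj_polynomial (\<lambda>z. of_real (g z))"
  using assms
proof (induction rule: real_polynomial_function.induct)
  case (linear f)
  have decompose: "f z = Re z * f 1 + Im z * f \<i>" for z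
  proof -
    have "z = Re z *\<^sub>R 1 + Im z *\<^sub>R \<i>"
      by (simp add: complex_eq_iff)
    then have "f z = f (Re z *\<^sub>R 1 + Im z *\<^sub>R \<i>)"
      by (rule arg_cong)
    also have "\<dots> = Re z * f 1 + Im z * f \<i>"
      using linear by (simp add: linear_simps)
    finally show ?thesis .
  qed
  have "complex_of_real (f z) = (f 1 / 2 - \<i> * f \<i> / 2) * (z ^ 1 * cnj z ^ 0)
      + (f 1 / 2 + \<i> * f \<i> / 2) * (z ^ 0 * cnj z ^ 1)" for z
  proof -
    have "complex_of_real (Re z) = (z + cnj z) / 2" "complex_of_real (Im z) = - \<i> * (z - cnj z) / 2"
      by (simp_all add: complex_eq_iff)
    then have "complex_of_real (f z) = (z + cnj z) / 2 * f 1 + (- \<i> * (z - cnj z) / 2) * f \<i>"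
      by (simp only: decompose[of z] of_real_add of_real_mult)
    then show ?thesis
      by (simp add: field_simps)
  qed
  then have "(\<lambda>z. complex_of_real (f z)) = (\<lambda>z. (f 1 / 2 - \<i> * f \<i> / 2) * (z ^ 1 * cnj z ^ 0)
      + (f 1 / 2 + \<i> * f \<i> / 2) * (z ^ 0 * cnj z ^ 1))"
    by (rule ext)
  then show ?case
    by (simp only: zcnj_polynomial.add zcnj_polynomial.monomial)
next
  case (const c)
  show ?case
    by (rule zcnj_polynomial_const)
next
  case (add f g)
  then show ?case
    by (simp add: zcnj_polynomial.add)
next
  case (mult f g)
  then show ?case
    by (simp add: zcnj_polynomial_mult)
qed

locale circle_distributions_same_moments =
  M1: circle_distribution M1 + M2: circle_distribution M2 for M1 M2 +
  assumes moments_eq: "(\<integral>z. z ^ n \<partial>M1) = (\<integral>z. z ^ n \<partial>M2)"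
begin

lemma integral_zcnj_polynomial_eq:
  "zcnj_polynomial f \<Longrightarrow> integral\<^sup>L M1 f = integral\<^sup>L M2 f"
proof (induction rule: zcnj_polynomial.induct)
  case (monomial c j k)
  then show ?case
    using M1.integral_power_mult_cnj_power M2.integral_power_mult_cnj_power moments_eq by simp
next
  case (add f g)
  then have "continuous_on UNIV f" "continuous_on UNIV g"
    by (simp_all add: zcnj_polynomial_continuous)
  then show ?case
    using add.IH by (simp add: M1.integrable_continuous M2.integrable_continuous)
qed

lemma integral_continuous_eq:
  fixes f :: "complex \<Rightarrow> real"
  assumes f: "continuous_on UNIV f"
  shows "(\<integral>z. f z \<partial>M1) = (\<integral>z. f z \<partial>M2)"
proof -
  have "\<bar>(\<integral>z. f z \<partial>M1) - (\<integral>z. f z \<partial>M2)\<bar> \<le> 0 + e" if e: "e > 0" for e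
  proof -
    obtain g where g: "real_polynomial_function g"
      and approx: "\<And>z. z \<in> sphere 0 1 \<Longrightarrow> \<bar>f z - g z\<bar> < e / 2"
      using Stone_Weierstrass_real_polynomial_function[of "sphere 0 1" f "e / 2"] f e
      by (auto intro: continuous_on_subset)
    have g_cont: "continuous_on UNIV g"
      using continuous_real_polymonial_function[OF g] by (simp add: continuous_at_imp_continuous_on)
    have "complex_of_real (\<integral>z. g z \<partial>M1) = complex_of_real (\<integral>z. g z \<partial>M2)"
      using integral_zcnj_polynomial_eq[OF zcnj_polynomial_of_real[OF g]] by simp
    then have same: "(\<integral>z. g z \<partial>M1) = (\<integral>z. g z \<partial>M2)"
      by (rule of_real_eq_iff[THEN iffD1])
    have close: "\<bar>(\<integral>z. f z \<partial>M) - (\<integral>z. g z \<partial>M)\<bar> \<le> e / 2" if "circle_distribution M" for M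
    proof -
      interpret circle_distribution M
        by (fact that)
      have "(\<integral>z. f z \<partial>M) - (\<integral>z. g z \<partial>M) = (\<integral>z. f z - g z \<partial>M)"
        using f g_cont by (simp add: integrable_continuous)
      also have "\<bar>\<dots>\<bar> \<le> e / 2"
        using f g_cont approx by (intro abs_integral_le continuous_intros less_imp_le) auto
      finally show ?thesis .
    qed
    show ?thesis
      using close[OF M1.circle_distribution_axioms] close[OF M2.circle_distribution_axioms] same
      by linarith
  qed
  then show ?thesis
    using field_le_epsilon[of "\<bar>(\<integral>z. f z \<partial>M1) - (\<integral>z. f z \<partial>M2)\<bar>" 0] by simp
qed

lemma measure_closed_eq:
  assumes C: "closed C"
  shows "measure M1 C = measure M2 C"
proof (cases "C = {}")
  case False
  define s where "s k z = max 0 (1 - real k * infdist z C)" for k z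
  have s_cont: "continuous_on UNIV (s k)" for k
    unfolding s_def by (intro continuous_intros continuous_on_infdist continuous_on_id)
  have s_lim: "(\<lambda>k. s k z) \<longlonglongrightarrow> indicator C z" for z
  proof (cases "z \<in> C")
    case True
    then show ?thesis
      by (simp add: s_def infdist_zero)
  next
    case z: False
    have d: "infdist z C > 0"
      using infdist_pos_not_in_closed[OF C False z] .
    obtain N :: nat where N: "1 / infdist z C < real N"
      using reals_Archimedean2 by blast
    have "s k z = 0" if "N \<le> k" for k
    proof -
      have "1 < real N * infdist z C"
        using N d by (simp add: field_simps)
      also have "\<dots> \<le> real k * infdist z C"
        using that d by (simp add: mult_right_mono)
      finally show ?thesis
        by (simp add: s_def)
    qed
    then have "eventually (\<lambda>k. s k z = 0) sequentially"
      by (auto simp: eventually_sequentially)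
    then show ?thesis
      using z by (simp add: tendsto_eventually)
  qed
  have s_integral_lim: "(\<lambda>k. \<integral>z. s k z \<partial>M) \<longlonglongrightarrow> measure M C" if "circle_distribution M" for M
  proof -
    interpret circle_distribution M
      by (fact that)
    have "(\<lambda>k. \<integral>z. s k z \<partial>M) \<longlonglongrightarrow> (\<integral>z. indicator C z \<partial>M)"
    proof (rule integral_dominated_convergence[where w="\<lambda>_. 1"])
      show "indicat_real C \<in> borel_measurable M"
        using borel_closed[OF C] by (intro borel_measurable_indicator) simp
      show "s k \<in> borel_measurable M" for k
        using s_cont by (rule borel_measurable_continuous)
      show "AE z in M. norm (s k z) \<le> 1" for k
        by (intro AE_I2) (auto simp: s_def infdist_nonneg)
    qed (simp_all add: s_lim)
    then show ?thesis
      by simp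
  qed
  have "(\<lambda>k. \<integral>z. s k z \<partial>M1) = (\<lambda>k. \<integral>z. s k z \<partial>M2)"
    using integral_continuous_eq[OF s_cont] by simp
  then show ?thesis
    using s_integral_lim[OF M1.circle_distribution_axioms] s_integral_lim[OF M2.circle_distribution_axioms]
    by (metis LIMSEQ_unique)
qed simp

lemma measures_eq: "M1 = M2"
proof (rule measure_eqI_generator_eq[where E="Collect closed" and \<Omega>=UNIV and A="\<lambda>_. UNIV"])
  have "sets borel = sigma_sets (UNIV :: complex set) (Collect closed)"
    by (simp add: borel_eq_closed sets_measure_of)
  then show "sets M1 = sigma_sets UNIV (Collect closed)" "sets M2 = sigma_sets UNIV (Collect closed)"
    by simp_all
  show "emeasure M1 C = emeasure M2 C" if "C \<in> Collect closed" for C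
    using measure_closed_eq[of C] that by (simp add: M1.emeasure_eq_measure M2.emeasure_eq_measure)
qed (auto simp: Int_stable_def)

end

lemma circle_distribution_eqI:
  assumes "circle_distribution M1" "circle_distribution M2"
    and "\<And>n. (\<integral>z. z ^ n \<partial>M1) = (\<integral>z. z ^ n \<partial>M2)"
  shows "M1 = M2"
proof -
  interpret circle_distributions_same_moments M1 M2
    using assms by (simp add: circle_distributions_same_moments_def circle_distributions_same_moments_axioms_def)
  show ?thesis
    by (rule measures_eq)
qed

section \<open>Uniqueness of the spectral measure\<close>

lemma opuc_measure_moments_eq:
  assumes \<mu>1: "is_opuc_measure a \<mu>1" and \<mu>2: "is_opuc_measure a \<mu>2"
  shows "(\<integral>z. z ^ n \<partial>\<mu>1) = (\<integral>z. z ^ n \<partial>\<mu>2)"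
proof (induction n rule: less_induct)
  case (less n)
  have recursion: "(\<integral>z. z ^ n \<partial>\<mu>) = - (\<Sum>i<n. coeff (opuc a n) i * (\<integral>z. z ^ i \<partial>\<mu>))"
    if "n > 0" and \<mu>: "is_opuc_measure a \<mu>" for \<mu>
  proof -
    interpret circle_distribution \<mu>
      using \<mu> by (simp add: is_opuc_measure_iff)
    have "poly (opuc a n) z = z ^ n + (\<Sum>i<n. coeff (opuc a n) i * z ^ i)" for z
      by (simp add: poly_altdef_le[OF degree_opuc] lessThan_Suc_atMost[symmetric] coeff_opuc_self)
    moreover have "(\<integral>z. poly (opuc a n) z * cnj (z ^ 0) \<partial>\<mu>) = 0"
      using \<mu> \<open>n > 0\<close> by (simp only: is_opuc_measure_iff)
    ultimately have "0 = (\<integral>z. z ^ n + (\<Sum>i<n. coeff (opuc a n) i * z ^ i) \<partial>\<mu>)"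
      by simp
    also have "\<dots> = (\<integral>z. z ^ n \<partial>\<mu>) + (\<Sum>i<n. coeff (opuc a n) i * (\<integral>z. z ^ i \<partial>\<mu>))"
    proof -
      have "integrable \<mu> (\<lambda>z. z ^ i)" for i
        by (intro integrable_continuous continuous_intros)
      then show ?thesis
        by (simp add: integral_sum integrable_sum)
    qed
    finally show ?thesis
      by (simp add: eq_neg_iff_add_eq_0 add.commute)
  qed
  show ?case
  proof (cases "n = 0")
    case True
    then show ?thesis
      using \<mu>1 \<mu>2 by (simp add: is_opuc_measure_iff circle_distribution_def prob_space.prob_space)
  next
    case False
    then show ?thesis
      using recursion[OF _ \<mu>1] recursion[OF _ \<mu>2] less by simp
  qed
qed

lemma mu_alpha_eqI:
  assumes "is_opuc_measure a \<mu>"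
  shows "mu_alpha a = \<mu>"
  unfolding mu_alpha_def
proof (rule the_equality)
  show "\<mu>' = \<mu>" if "is_opuc_measure a \<mu>'" for \<mu>'
    using that assms by (intro circle_distribution_eqI opuc_measure_moments_eq[OF that assms])
      (simp_all add: is_opuc_measure_iff)
qed (fact assms)

section \<open>Existence of the spectral measure\<close>

lemma norm_circlepath_0_1 [simp]: "cmod (circlepath 0 1 t) = 1"
  by (simp add: circlepath norm_exp_eq_Re)

lemma continuous_on_circlepath [continuous_intros]: "continuous_on S (circlepath z r)"
  unfolding circlepath by (intro continuous_intros)

lemma circle_distribution_distr_circlepath:
  assumes "real_distribution M"
  shows "circle_distribution (distr M borel (circlepath 0 1))"
proof -
  interpret real_distribution M
    by (fact assms)
  have meas: "circlepath 0 1 \<in> borel_measurable M"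
    unfolding measurable_cong_sets[OF events_eq_borel refl]
    by (intro borel_measurable_continuous_onI continuous_intros)
  have "circlepath 0 1 -` sphere 0 1 \<inter> space M = space M"
    by auto
  then have "emeasure (distr M borel (circlepath 0 1)) (sphere 0 1) = 1"
    using emeasure_space_1 by (simp add: emeasure_distr[OF meas])
  then show ?thesis
    using prob_space_distr[OF meas] by (simp add: circle_distribution_def circle_distribution_axioms_def)
qed

lemma poly_nonzero_on_larger_ball:
  fixes p :: "complex poly"
  assumes "\<And>z. cmod z \<le> 1 \<Longrightarrow> poly p z \<noteq> 0"
  shows "\<exists>R>1. \<forall>z\<in>ball 0 R. poly p z \<noteq> 0"
proof -
  have "p \<noteq> 0"
    using assms[of 0] by auto
  then have fin: "finite (cmod ` {z. poly p z = 0})"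
    by (simp add: poly_roots_finite)
  define R where "R = Min (insert 2 (cmod ` {z. poly p z = 0}))"
  have "R > 1"
    unfolding R_def using fin assms by (force simp: not_le)
  moreover have "poly p z \<noteq> 0" if "z \<in> ball 0 R" for z
    using that fin by (auto simp: R_def)
  ultimately show ?thesis
    by blast
qed

lemma set_integral_holomorphic_circlepath:
  assumes g: "g holomorphic_on ball 0 R" and R: "R > 1"
  shows "(LINT t:{0..1}|lborel. g (circlepath 0 1 t) * circlepath 0 1 t) = 0"
proof -
  have "path_image (circlepath 0 1) \<subseteq> ball 0 R"
    using R by auto
  then have "(g has_contour_integral 0) (circlepath 0 1)"
    by (intro Cauchy_theorem_convex_simple[OF g convex_ball]) auto
  then have "((\<lambda>t. g (circlepath 0 1 t) * circlepath 0 1 t * (2 * pi * \<i>)) has_integral 0) {0..1}"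
    unfolding has_contour_integral vector_derivative_circlepath by (simp add: circlepath mult_ac)
  then have "((\<lambda>t. g (circlepath 0 1 t) * circlepath 0 1 t * (2 * pi * \<i>) * inverse (2 * pi * \<i>))
      has_integral 0 * inverse (2 * pi * \<i>)) {0..1}"
    by (rule has_integral_mult_left)
  then have "((\<lambda>t. g (circlepath 0 1 t) * circlepath 0 1 t) has_integral 0) {0..1}"
    by (simp add: field_simps)
  moreover have "continuous_on {0..1} (\<lambda>t. g (circlepath 0 1 t) * circlepath 0 1 t)"
    using R by (intro continuous_intros continuous_on_compose2[OF holomorphic_on_imp_continuous_on[OF g]])
      auto
  then have "set_integrable lborel {0..1} (\<lambda>t. g (circlepath 0 1 t) * circlepath 0 1 t)"
    unfolding set_integrable_def by (rule borel_integrable_compact[OF compact_Icc])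
  ultimately show ?thesis
    by (simp add: set_borel_integral_eq_integral(2) integral_unique)
qed

definition normalized_density :: "(real \<Rightarrow> real) \<Rightarrow> real measure" where
  "normalized_density w = density lborel (\<lambda>t. indicator {0..1} t * w t / (LINT s:{0..1}|lborel. w s))"

context
  fixes w :: "real \<Rightarrow> real"
  assumes w_cont: "continuous_on {0..1} w" and w_pos: "\<And>t. t \<in> {0..1} \<Longrightarrow> w t > 0"
begin

private abbreviation "w_integral \<equiv> (LINT s:{0..1}|lborel. w s)"

private lemma w_integral_pos: "w_integral > 0"
proof -
  obtain t0 where t0: "t0 \<in> {0..1}" "\<And>t. t \<in> {0..1} \<Longrightarrow> w t0 \<le> w t"
    using continuous_attains_inf[OF compact_Icc _ w_cont] by auto
  have "w t0 = (LINT (s::real):{0..1}|lborel. w t0)"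
    unfolding set_lebesgue_integral_def by simp
  also have "\<dots> \<le> w_integral"
    using t0 borel_integrable_compact[OF compact_Icc w_cont]
    by (intro set_integral_mono) (auto simp: set_integrable_def)
  finally show ?thesis
    using w_pos[OF t0(1)] by simp
qed

private lemma density_measurable [measurable]:
  "(\<lambda>t. indicator {0..1} t * w t / w_integral) \<in> borel_measurable borel"
  using borel_measurable_continuous_on_indicator[OF _ w_cont] by simp

private lemma density_nonneg: "indicator {0..1} t * w t / w_integral \<ge> 0"
  using w_pos w_integral_pos by (simp add: indicator_def less_imp_le)

lemma real_distribution_normalized_density: "real_distribution (normalized_density w)"
proof -
  have "integrable lborel (\<lambda>t. indicator {0..1} t * w t / w_integral)"
    using borel_integrable_compact[OF compact_Icc w_cont] by simp
  have "emeasure (normalized_density w) UNIV = (\<integral>\<^sup>+ t. ennreal (indicator {0..1} t * w t / w_integral) \<partial>lborel)"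
    unfolding normalized_density_def by (subst emeasure_density) simp_all
  also have "\<dots> = ennreal (LINT t|lborel. indicator {0..1} t * w t / w_integral)"
    by (rule nn_integral_eq_integral) (simp_all add: density_nonneg \<open>integrable lborel _\<close>)
  also have "\<dots> = 1"
    using w_integral_pos by (simp add: set_lebesgue_integral_def)
  finally have "prob_space (normalized_density w)"
    by (intro prob_spaceI) (simp add: normalized_density_def)
  then show ?thesis
    by (simp add: real_distribution_def real_distribution_axioms_def normalized_density_def)
qed

lemma AE_normalized_density_Icc: "AE t in normalized_density w. t \<in> {0..1}"
  unfolding normalized_density_def by (subst AE_density) (measurable, auto simp: indicator_def)

lemma integral_normalized_density:
  fixes f :: "real \<Rightarrow> 'b::{banach, second_countable_topology}"
  assumes "f \<in> borel_measurable borel"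
  shows "(\<integral>t. f t \<partial>normalized_density w) = (1 / w_integral) *\<^sub>R (LINT t:{0..1}|lborel. w t *\<^sub>R f t)"
proof -
  have "(\<integral>t. f t \<partial>normalized_density w) = (LINT t|lborel. (indicator {0..1} t * w t / w_integral) *\<^sub>R f t)"
    unfolding normalized_density_def using assms density_nonneg by (intro integral_density) auto
  also have "\<dots> = (LINT t|lborel. (1 / w_integral) *\<^sub>R (indicator {0..1} t *\<^sub>R (w t *\<^sub>R f t)))"
    by (simp add: scaleR_scaleR mult.commute)
  also have "\<dots> = (1 / w_integral) *\<^sub>R (LINT t:{0..1}|lborel. w t *\<^sub>R f t)"
    unfolding set_lebesgue_integral_def by (rule integral_scaleR_right)
  finally show ?thesis .
qed

end

(* The inverse Szego recursion expresses Phi_n and Phi*_n through Phi_(n+1) and Phi*_(n+1), so it is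
   this pair of relations that propagates downward from degree N. *)
definition szego_pair_orthogonal :: "complex measure \<Rightarrow> (nat \<Rightarrow> complex) \<Rightarrow> nat \<Rightarrow> bool" where
  "szego_pair_orthogonal \<mu> a n \<longleftrightarrow>
     (\<forall>k<n. (\<integral>z. poly (opuc a n) z * cnj (z ^ k) \<partial>\<mu>) = 0) \<and>
     (\<forall>k\<in>{1..n}. (\<integral>z. poly (pstar n (opuc a n)) z * cnj (z ^ k) \<partial>\<mu>) = 0)"

lemma (in circle_distribution) integral_linear_combination:
  fixes f g :: "complex \<Rightarrow> complex"
  assumes "continuous_on UNIV f" "continuous_on UNIV g"
  shows "(\<integral>z. c * (f z + d * g z) \<partial>M) = c * ((\<integral>z. f z \<partial>M) + d * (\<integral>z. g z \<partial>M))"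
  using integrable_continuous[OF assms(1)] integrable_continuous[OF assms(2)] by simp

lemma (in circle_distribution) szego_pair_orthogonal_Suc_imp:
  assumes a: "cmod (a n) < 1" and orth: "szego_pair_orthogonal M a (Suc n)"
  shows "szego_pair_orthogonal M a n"
proof -
  define \<rho> where "\<rho> = 1 - a n * cnj (a n)"
  have \<rho>_real: "\<rho> = complex_of_real (1 - (cmod (a n))\<^sup>2)"
    unfolding \<rho>_def of_real_diff complex_norm_square by simp
  have "(cmod (a n))\<^sup>2 < 1"
    using a by (simp add: abs_square_less_1)
  then have \<rho>: "\<rho> \<noteq> 0"
    unfolding \<rho>_real of_real_eq_0_iff by simp
  define P S P' S' where "P = poly (opuc a n)" and "S = poly (pstar n (opuc a n))"
    and "P' = poly (opuc a (Suc n))" and "S' = poly (pstar (Suc n) (opuc a (Suc n)))"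
  have cont: "continuous_on UNIV P" "continuous_on UNIV S" "continuous_on UNIV P'" "continuous_on UNIV S'"
    unfolding P_def S_def P'_def S'_def by (intro continuous_intros)+
  have P'_orth: "(\<integral>z. P' z * cnj (z ^ k) \<partial>M) = 0" if "k < Suc n" for k
    using orth that unfolding szego_pair_orthogonal_def P'_def by blast
  have S'_orth: "(\<integral>z. S' z * cnj (z ^ k) \<partial>M) = 0" if "k \<in> {1..Suc n}" for k
    using orth that unfolding szego_pair_orthogonal_def S'_def by blast
  have "(\<integral>z. P z * cnj (z ^ k) \<partial>M) = 0" if "k < n" for k
  proof -
    have "(\<integral>z. P z * cnj (z ^ k) \<partial>M)
        = (\<integral>z. inverse \<rho> * (P' z * cnj (z ^ Suc k) + cnj (a n) * (S' z * cnj (z ^ Suc k))) \<partial>M)"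
    proof (rule integral_cong_circle)
      fix z :: complex
      assume "cmod z = 1"
      have "P' z * cnj (z ^ Suc k) + cnj (a n) * (S' z * cnj (z ^ Suc k))
          = (P' z + cnj (a n) * S' z) * cnj (z ^ Suc k)"
        by (simp only: distrib_right mult.assoc)
      also have "\<dots> = \<rho> * (P z * cnj (z ^ k)) * (z * cnj z)"
        unfolding P'_def S'_def poly_opuc_Suc_add_pstar \<rho>_def P_def by (simp add: mult_ac)
      also have "\<dots> = \<rho> * (P z * cnj (z ^ k))"
        using unit_mult_cnj[OF \<open>cmod z = 1\<close>] by simp
      finally show "P z * cnj (z ^ k)
          = inverse \<rho> * (P' z * cnj (z ^ Suc k) + cnj (a n) * (S' z * cnj (z ^ Suc k)))"
        using \<rho> by simp
    qed (intro continuous_intros cont)+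
    also have "\<dots> = inverse \<rho> * ((\<integral>z. P' z * cnj (z ^ Suc k) \<partial>M) + cnj (a n) * (\<integral>z. S' z * cnj (z ^ Suc k) \<partial>M))"
      by (rule integral_linear_combination) (intro continuous_intros cont)+
    also have "\<dots> = 0"
      using P'_orth[of "Suc k"] S'_orth[of "Suc k"] that by simp
    finally show ?thesis .
  qed
  moreover have "(\<integral>z. S z * cnj (z ^ k) \<partial>M) = 0" if "k \<in> {1..n}" for k
  proof -
    have "(\<integral>z. S z * cnj (z ^ k) \<partial>M)
        = (\<integral>z. inverse \<rho> * (S' z * cnj (z ^ k) + a n * (P' z * cnj (z ^ k))) \<partial>M)"
    proof (rule integral_cong_circle)
      fix z :: complex
      have "S' z * cnj (z ^ k) + a n * (P' z * cnj (z ^ k)) = (S' z + a n * P' z) * cnj (z ^ k)"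
        by (simp only: distrib_right mult.assoc)
      also have "\<dots> = \<rho> * (S z * cnj (z ^ k))"
        unfolding P'_def S'_def poly_pstar_Suc_add_opuc \<rho>_def S_def by (simp only: mult.assoc)
      finally show "S z * cnj (z ^ k) = inverse \<rho> * (S' z * cnj (z ^ k) + a n * (P' z * cnj (z ^ k)))"
        using \<rho> by simp
    qed (intro continuous_intros cont)+
    also have "\<dots> = inverse \<rho> * ((\<integral>z. S' z * cnj (z ^ k) \<partial>M) + a n * (\<integral>z. P' z * cnj (z ^ k) \<partial>M))"
      by (rule integral_linear_combination) (intro continuous_intros cont)+
    also have "\<dots> = 0"
      using P'_orth[of k] S'_orth[of k] that by simp
    finally show ?thesis .
  qed
  ultimately show ?thesis
    unfolding szego_pair_orthogonal_def P_def S_def by blast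
qed

lemma (in circle_distribution) szego_pair_orthogonal_le:
  assumes "szego_pair_orthogonal M a N" "\<And>j. j < N \<Longrightarrow> cmod (a j) < 1" "n \<le> N"
  shows "szego_pair_orthogonal M a n"
  using assms(3)
proof (induction rule: inc_induct)
  case (step m)
  then have "cmod (a m) < 1"
    using assms(2) by simp
  then show ?case
    using step.IH by (rule szego_pair_orthogonal_Suc_imp)
qed (fact assms(1))

definition bernstein_szego_weight :: "(nat \<Rightarrow> complex) \<Rightarrow> nat \<Rightarrow> real \<Rightarrow> real" where
  "bernstein_szego_weight a N t = 1 / (cmod (poly (pstar N (opuc a N)) (circlepath 0 1 t)))\<^sup>2"

definition bernstein_szego :: "(nat \<Rightarrow> complex) \<Rightarrow> nat \<Rightarrow> complex measure" where
  "bernstein_szego a N = distr (normalized_density (bernstein_szego_weight a N)) borel (circlepath 0 1)"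

context
  fixes a :: "nat \<Rightarrow> complex" and N :: nat
  assumes a: "\<And>j. j < N \<Longrightarrow> cmod (a j) < 1"
begin

private lemma pstar_circle_nonzero: "poly (pstar N (opuc a N)) (circlepath 0 1 t) \<noteq> 0"
  using poly_pstar_opuc_nonzero[OF a] by simp

private lemma weight_continuous: "continuous_on {0..1} (bernstein_szego_weight a N)"
  unfolding bernstein_szego_weight_def using pstar_circle_nonzero by (intro continuous_intros) auto

private lemma weight_pos: "bernstein_szego_weight a N t > 0"
  using pstar_circle_nonzero by (simp add: bernstein_szego_weight_def)

lemma real_distribution_bernstein_szego_density:
  "real_distribution (normalized_density (bernstein_szego_weight a N))"
  using weight_continuous weight_pos by (rule real_distribution_normalized_density)

lemma AE_bernstein_szego_density_Icc:
  "AE t in normalized_density (bernstein_szego_weight a N). t \<in> {0..1}"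
  using weight_continuous weight_pos by (rule AE_normalized_density_Icc)

lemma integral_bernstein_szego:
  fixes F :: "complex \<Rightarrow> 'b::{banach, second_countable_topology}"
  assumes "continuous_on UNIV F"
  shows "(\<integral>z. F z \<partial>bernstein_szego a N) = (\<integral>t. F (circlepath 0 1 t) \<partial>normalized_density (bernstein_szego_weight a N))"
  unfolding bernstein_szego_def
proof (rule integral_distr)
  show "circlepath 0 1 \<in> normalized_density (bernstein_szego_weight a N) \<rightarrow>\<^sub>M borel"
    by (simp add: normalized_density_def borel_measurable_continuous_onI continuous_intros)
  show "F \<in> borel_measurable borel"
    using assms by (rule borel_measurable_continuous_onI)
qed

lemma circle_distribution_bernstein_szego: "circle_distribution (bernstein_szego a N)"
  unfolding bernstein_szego_def
  by (rule circle_distribution_distr_circlepath[OF real_distribution_bernstein_szego_density])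

lemma integral_bernstein_szego_eq_0:
  fixes F :: "complex \<Rightarrow> complex"
  assumes F: "continuous_on UNIV F" and g: "g holomorphic_on ball 0 R" "R > 1"
    and F_eq: "\<And>z. cmod z = 1 \<Longrightarrow> F z = of_real ((cmod (poly (pstar N (opuc a N)) z))\<^sup>2) * (g z * z)"
  shows "(\<integral>z. F z \<partial>bernstein_szego a N) = 0"
proof -
  let ?w = "bernstein_szego_weight a N"
  have "(\<integral>z. F z \<partial>bernstein_szego a N) = (\<integral>t. F (circlepath 0 1 t) \<partial>normalized_density ?w)"
    by (rule integral_bernstein_szego[OF F])
  also have "\<dots> = (1 / (LINT s:{0..1}|lborel. ?w s)) *\<^sub>R (LINT t:{0..1}|lborel. ?w t *\<^sub>R F (circlepath 0 1 t))"
    using weight_continuous weight_pos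
    by (rule integral_normalized_density)
      (rule borel_measurable_continuous_onI, rule continuous_on_compose2[OF F continuous_on_circlepath], simp)
  also have "(LINT t:{0..1}|lborel. ?w t *\<^sub>R F (circlepath 0 1 t)) = (LINT t:{0..1}|lborel. g (circlepath 0 1 t) * circlepath 0 1 t)"
  proof (rule set_lebesgue_integral_cong)
    show "\<forall>t. t \<in> {0..1} \<longrightarrow> ?w t *\<^sub>R F (circlepath 0 1 t) = g (circlepath 0 1 t) * circlepath 0 1 t"
      using pstar_circle_nonzero by (simp add: F_eq bernstein_szego_weight_def scaleR_conv_of_real)
  qed simp
  also have "\<dots> = 0"
    by (rule set_integral_holomorphic_circlepath[OF g])
  finally show ?thesis
    by simp
qed

(* On the circle Phi_N(z) conj(z)^k / |Phi*_N(z)|^2 = z^(N-k) / Phi*_N(z), which is holomorphic on a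
   disc of radius > 1, so Cauchy's theorem applies; Phi*_N is handled the same way after conjugation. *)
lemma szego_pair_orthogonal_bernstein_szego: "szego_pair_orthogonal (bernstein_szego a N) a N"
proof -
  let ?P = "poly (opuc a N)" and ?S = "poly (pstar N (opuc a N))"
  obtain R where R: "R > 1" "\<And>z. z \<in> ball 0 R \<Longrightarrow> ?S z \<noteq> 0"
    using poly_nonzero_on_larger_ball[OF poly_pstar_opuc_nonzero[where n=N and a=a, OF a]] by auto
  have S_circle: "?S z = z ^ N * cnj (?P z)" if "cmod z = 1" for z
    using that by (rule poly_pstar_circle[OF degree_opuc])
  have S_nonzero: "?S z \<noteq> 0" if "cmod z = 1" for z
    using that R by auto
  have hol: "(\<lambda>z. z ^ m / ?S z) holomorphic_on ball 0 R" for m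
    using R(2) by (intro holomorphic_intros) auto
  have "(\<integral>z. ?P z * cnj (z ^ k) \<partial>bernstein_szego a N) = 0" if "k < N" for k
  proof -
    obtain m where m: "N = Suc (k + m)"
      using \<open>k < N\<close> less_iff_Suc_add by auto
    show ?thesis
    proof (rule integral_bernstein_szego_eq_0[OF _ hol R(1)])
      fix z :: complex
      assume z: "cmod z = 1"
      have "of_real ((cmod (?S z))\<^sup>2) * (z ^ m / ?S z * z) = cnj (?S z) * z ^ Suc m"
        unfolding complex_norm_square using S_nonzero[OF z] by (simp add: field_simps)
      also have "\<dots> = ?P z * cnj (z ^ k) * (z * cnj z) ^ Suc m"
      proof -
        have "cnj z ^ N = cnj z ^ k * cnj z ^ Suc m"
          unfolding m by (simp only: add_Suc_right[symmetric] power_add)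
        then show ?thesis
          by (simp add: S_circle[OF z] power_mult_distrib mult_ac)
      qed
      also have "\<dots> = ?P z * cnj (z ^ k)"
        using unit_mult_cnj[OF z] by simp
      finally show "?P z * cnj (z ^ k) = of_real ((cmod (?S z))\<^sup>2) * (z ^ m / ?S z * z)"
        by (rule sym)
    qed (intro continuous_intros)
  qed
  moreover have "(\<integral>z. ?S z * cnj (z ^ k) \<partial>bernstein_szego a N) = 0" if k: "k \<in> {1..N}" for k
  proof -
    obtain m where m: "k = Suc m"
      using k by (cases k) auto
    have "(\<integral>z. cnj (?S z * cnj (z ^ k)) \<partial>bernstein_szego a N) = 0"
    proof (rule integral_bernstein_szego_eq_0[OF _ hol R(1)])
      fix z :: complex
      assume z: "cmod z = 1"
      show "cnj (?S z * cnj (z ^ k)) = of_real ((cmod (?S z))\<^sup>2) * (z ^ m / ?S z * z)"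
        unfolding complex_norm_square using S_nonzero[OF z] by (simp add: m field_simps)
    qed (intro continuous_intros)
    then show ?thesis
      by (simp add: integral_cnj del: complex_cnj_mult)
  qed
  ultimately show ?thesis
    unfolding szego_pair_orthogonal_def by blast
qed

end

lemma bernstein_szego_orthogonal:
  assumes a: "\<And>j. j < N \<Longrightarrow> cmod (a j) < 1" and "k < n" "n \<le> N"
  shows "(\<integral>z. poly (opuc a n) z * cnj (z ^ k) \<partial>bernstein_szego a N) = 0"
proof -
  interpret circle_distribution "bernstein_szego a N"
    using a by (rule circle_distribution_bernstein_szego)
  have "szego_pair_orthogonal (bernstein_szego a N) a n"
    using szego_pair_orthogonal_bernstein_szego[OF a] a \<open>n \<le> N\<close> by (rule szego_pair_orthogonal_le)
  then show ?thesis
    using \<open>k < n\<close> by (simp add: szego_pair_orthogonal_def)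
qed

lemma tight_bernstein_szego_density:
  assumes a: "\<And>j. cmod (a j) < 1"
  shows "tight (\<lambda>N. normalized_density (bernstein_szego_weight a N))"
  unfolding tight_def
proof (intro conjI allI impI)
  show "real_distribution (normalized_density (bernstein_szego_weight a N))" for N
    using a by (rule real_distribution_bernstein_szego_density)
  have "measure (normalized_density (bernstein_szego_weight a N)) {-1<..1} = 1" for N
  proof -
    interpret real_distribution "normalized_density (bernstein_szego_weight a N)"
      using a by (rule real_distribution_bernstein_szego_density)
    have "AE t in normalized_density (bernstein_szego_weight a N). t \<in> {-1<..1}"
      using AE_bernstein_szego_density_Icc[OF a] by eventually_elim auto
    then show ?thesis
      by (subst (asm) AE_in_set_eq_1) simp_all
  qed
  then show "\<exists>x y. x < y \<and> (\<forall>N. 1 - e < measure (normalized_density (bernstein_szego_weight a N)) {x<..y})"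
    if "e > 0" for e :: real
    using that by (intro exI[of _ "-1"] exI[of _ 1]) auto
qed

lemma tendsto_integral_distr_circlepath:
  fixes F :: "complex \<Rightarrow> 'b::{banach, second_countable_topology}"
  assumes \<rho>: "\<And>n. real_distribution (\<rho> n)" and M: "real_distribution M" and conv: "weak_conv_m \<rho> M"
    and F: "continuous_on UNIV F"
  shows "(\<lambda>n. \<integral>z. F z \<partial>distr (\<rho> n) borel (circlepath 0 1)) \<longlonglongrightarrow> (\<integral>z. F z \<partial>distr M borel (circlepath 0 1))"
proof -
  have pullback: "(\<integral>z. F z \<partial>distr N borel (circlepath 0 1)) = (\<integral>t. F (circlepath 0 1 t) \<partial>N)"
    if "real_distribution N" for N
  proof (rule integral_distr)
    show "circlepath 0 1 \<in> N \<rightarrow>\<^sub>M borel"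
      unfolding measurable_cong_sets[OF real_distribution.events_eq_borel[OF that] refl]
      by (intro borel_measurable_continuous_onI continuous_intros)
    show "F \<in> borel_measurable borel"
      using F by (rule borel_measurable_continuous_onI)
  qed
  have "compact (F ` sphere 0 1)"
    by (rule compact_continuous_image) (use F continuous_on_subset in auto)
  then obtain B where B: "\<And>z. z \<in> sphere 0 1 \<Longrightarrow> norm (F z) \<le> B"
    by (meson bounded_iff compact_imp_bounded image_eqI)
  have "continuous_on UNIV (\<lambda>t. F (circlepath 0 1 t))"
    by (rule continuous_on_compose2[OF F continuous_on_circlepath]) simp
  then have "(\<lambda>n. \<integral>t. F (circlepath 0 1 t) \<partial>\<rho> n) \<longlonglongrightarrow> (\<integral>t. F (circlepath 0 1 t) \<partial>M)"
    using B by (intro weak_conv_imp_integral_bdd_continuous_conv[OF \<rho> M conv, where B=B])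
      (simp_all add: continuous_on_eq_continuous_at)
  then show ?thesis
    by (simp add: pullback \<rho> M)
qed

lemma opuc_measure_exists:
  assumes a: "\<And>j. cmod (a j) < 1"
  shows "\<exists>\<mu>. is_opuc_measure a \<mu>"
proof -
  let ?\<rho> = "\<lambda>N. normalized_density (bernstein_szego_weight a N)"
  obtain r M where r: "strict_mono r" and M: "real_distribution M" and conv: "weak_conv_m (?\<rho> \<circ> r) M"
    using tight_imp_convergent_subsubsequence[OF tight_bernstein_szego_density[of a, OF a], of id]
    by (auto simp: strict_mono_def)
  define \<mu> where "\<mu> = distr M borel (circlepath 0 1)"
  have "(\<integral>z. poly (opuc a n) z * cnj (z ^ k) \<partial>\<mu>) = 0" if "k < n" for n k
  proof -
    have "(\<lambda>m. \<integral>z. poly (opuc a n) z * cnj (z ^ k) \<partial>bernstein_szego a (r m))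
        \<longlonglongrightarrow> (\<integral>z. poly (opuc a n) z * cnj (z ^ k) \<partial>\<mu>)"
      using tendsto_integral_distr_circlepath[OF _ M conv, of "\<lambda>z. poly (opuc a n) z * cnj (z ^ k)"]
        real_distribution_bernstein_szego_density a
      unfolding \<mu>_def bernstein_szego_def by (simp add: continuous_intros)
    moreover have "\<forall>\<^sub>F m in sequentially. (\<integral>z. poly (opuc a n) z * cnj (z ^ k) \<partial>bernstein_szego a (r m)) = 0"
      using eventually_ge_at_top[of n]
    proof eventually_elim
      case (elim m)
      then have "n \<le> r m"
        using seq_suble[OF r, of m] by linarith
      then show ?case
        using a \<open>k < n\<close> by (intro bernstein_szego_orthogonal) simp_all
    qed
    then have "(\<lambda>m. \<integral>z. poly (opuc a n) z * cnj (z ^ k) \<partial>bernstein_szego a (r m)) \<longlonglongrightarrow> 0"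
      by (rule tendsto_eventually)
    ultimately show ?thesis
      by (rule LIMSEQ_unique)
  qed
  moreover have "circle_distribution \<mu>"
    unfolding \<mu>_def using M by (rule circle_distribution_distr_circlepath)
  ultimately show ?thesis
    unfolding is_opuc_measure_iff by blast
qed

lemma is_opuc_measure_mu_alpha:
  assumes "\<And>j. cmod (a j) < 1"
  shows "is_opuc_measure a (mu_alpha a)"
proof -
  obtain \<mu> where "is_opuc_measure a \<mu>"
    using opuc_measure_exists[OF assms] ..
  then show ?thesis
    by (simp add: mu_alpha_eqI)
qed

lemma mu_alpha_rotate:
  assumes "cmod l = 1" "\<And>j. cmod (a j) < 1"
  shows "mu_alpha (rotate_verblunsky l a) = distr (mu_alpha a) borel (\<lambda>z. cnj l * z)"
  by (rule mu_alpha_eqI[OF is_opuc_measure_rotate[OF assms(1) is_opuc_measure_mu_alpha[OF assms(2)]]])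

section \<open>Invariance of the joint measure\<close>

(* No measurability of f is required, since the simple functions below f are transported by S. *)
lemma nn_integral_le_comp_measure_preserving:
  assumes S: "S \<in> M \<rightarrow>\<^sub>M M" and preserving: "distr M M S = M"
  shows "(\<integral>\<^sup>+x. f x \<partial>M) \<le> (\<integral>\<^sup>+x. f (S x) \<partial>M)"
proof -
  have "integral\<^sup>S M h \<le> (\<integral>\<^sup>+x. f (S x) \<partial>M)" if h: "simple_function M h" "h \<le> f" for h
  proof -
    have "integral\<^sup>S M h = (\<integral>\<^sup>+x. h x \<partial>distr M M S)"
      using nn_integral_eq_simple_integral[OF h(1)] by (simp add: preserving)
    also have "\<dots> = (\<integral>\<^sup>+x. h (S x) \<partial>M)"
      using S borel_measurable_simple_function[OF h(1)] by (intro nn_integral_distr) simp_all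
    also have "\<dots> \<le> (\<integral>\<^sup>+x. f (S x) \<partial>M)"
      using h(2) by (intro nn_integral_mono) (simp add: le_fun_def)
    finally show ?thesis .
  qed
  then show ?thesis
    unfolding nn_integral_def[of M f] by (intro SUP_least) auto
qed

lemma nn_integral_comp_measure_preserving_bij:
  assumes S: "S \<in> M \<rightarrow>\<^sub>M M" "distr M M S = M"
    and S': "S' \<in> M \<rightarrow>\<^sub>M M" "distr M M S' = M"
    and inverse: "\<And>x. x \<in> space M \<Longrightarrow> S (S' x) = x"
  shows "(\<integral>\<^sup>+x. f (S x) \<partial>M) = (\<integral>\<^sup>+x. f x \<partial>M)"
proof (rule antisym)
  have "(\<integral>\<^sup>+x. f (S x) \<partial>M) \<le> (\<integral>\<^sup>+x. f (S (S' x)) \<partial>M)"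
    using S' by (rule nn_integral_le_comp_measure_preserving)
  also have "\<dots> = (\<integral>\<^sup>+x. f x \<partial>M)"
    by (rule nn_integral_cong) (simp add: inverse)
  finally show "(\<integral>\<^sup>+x. f (S x) \<partial>M) \<le> (\<integral>\<^sup>+x. f x \<partial>M)" .
  show "(\<integral>\<^sup>+x. f x \<partial>M) \<le> (\<integral>\<^sup>+x. f (S x) \<partial>M)"
    using S by (rule nn_integral_le_comp_measure_preserving)
qed

(* F need not be countably additive: otherwise measure_of yields the null measure on both sides. *)
lemma distr_measure_of_eq:
  assumes T: "T \<in> N \<rightarrow>\<^sub>M N" and invariant: "\<And>A. A \<in> sets N \<Longrightarrow> F (T -` A \<inter> space N) = F A"
  shows "distr (measure_of (space N) (sets N) F) (measure_of (space N) (sets N) F) T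
    = measure_of (space N) (sets N) F" (is "distr ?M ?M T = ?M")
proof (rule measure_eqI)
  have sets: "sets ?M = sets N" and space: "space ?M = space N"
    by (simp_all add: sets.sigma_sets_eq)
  have T': "T \<in> ?M \<rightarrow>\<^sub>M ?M"
    using T by (simp add: measurable_def sets space)
  have emeasure: "emeasure ?M A = (if measure_space (space N) (sets N) F then F A else 0)" if "A \<in> sets N" for A
    using that by (simp add: emeasure_measure_of_conv sets.sigma_sets_eq)
  fix A
  assume "A \<in> sets (distr ?M ?M T)"
  then have A: "A \<in> sets N"
    by (simp add: sets)
  then have "T -` A \<inter> space N \<in> sets N"
    using T by (rule measurable_sets[rotated])
  then show "emeasure (distr ?M ?M T) A = emeasure ?M A"
    using A by (simp add: emeasure_distr[OF T'] sets space emeasure invariant)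
qed simp

lemma measurable_PiM_componentwise:
  assumes f: "\<And>i. f i \<in> M i \<rightarrow>\<^sub>M M i"
  shows "(\<lambda>\<omega> i. f i (\<omega> i)) \<in> (\<Pi>\<^sub>M i\<in>UNIV. M i) \<rightarrow>\<^sub>M (\<Pi>\<^sub>M i\<in>UNIV. M i)"
proof (rule measurable_PiM_single')
  show "(\<lambda>\<omega>. f i (\<omega> i)) \<in> (\<Pi>\<^sub>M i\<in>UNIV. M i) \<rightarrow>\<^sub>M M i" for i
    using measurable_component_singleton[of i UNIV M] f by (rule measurable_compose) simp
qed (auto simp: space_PiM PiE_iff intro: measurable_space[OF f])

lemma distr_PiM_componentwise:
  assumes prob: "\<And>i. prob_space (M i)" and f: "\<And>i. f i \<in> M i \<rightarrow>\<^sub>M M i"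
    and preserving: "\<And>i. distr (M i) (M i) (f i) = M i"
  shows "distr (\<Pi>\<^sub>M i\<in>UNIV. M i) (\<Pi>\<^sub>M i\<in>UNIV. M i) (\<lambda>\<omega> i. f i (\<omega> i)) = (\<Pi>\<^sub>M i\<in>UNIV. M i)"
proof -
  interpret product_prob_space M UNIV
    using prob by (simp add: product_prob_space_def product_sigma_finite_def product_prob_space_axioms_def
        prob_space_imp_sigma_finite)
  have meas: "(\<lambda>\<omega> i. f i (\<omega> i)) \<in> (\<Pi>\<^sub>M i\<in>UNIV. M i) \<rightarrow>\<^sub>M (\<Pi>\<^sub>M i\<in>UNIV. M i)"
    using f by (rule measurable_PiM_componentwise)
  show ?thesis
  proof (rule PiM_eq)
    fix J and F :: "'a \<Rightarrow> 'b set"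
    assume J: "finite J" and F: "\<And>j. j \<in> J \<Longrightarrow> F j \<in> sets (M j)"
    have "(\<lambda>\<omega> i. f i (\<omega> i)) -` prod_emb UNIV M J (Pi\<^sub>E J F) \<inter> space (\<Pi>\<^sub>M i\<in>UNIV. M i)
        = prod_emb UNIV M J (\<Pi>\<^sub>E j\<in>J. f j -` F j \<inter> space (M j))"
      by (auto simp: prod_emb_def space_PiM PiE_def Pi_def intro: measurable_space[OF f])
    moreover have "emeasure (M j) (f j -` F j \<inter> space (M j)) = emeasure (M j) (F j)" if "j \<in> J" for j
      using emeasure_distr[OF f F[OF that]] by (simp add: preserving)
    ultimately show "emeasure (distr (\<Pi>\<^sub>M i\<in>UNIV. M i) (\<Pi>\<^sub>M i\<in>UNIV. M i) (\<lambda>\<omega> i. f i (\<omega> i)))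
        (prod_emb UNIV M J (Pi\<^sub>E J F)) = (\<Prod>j\<in>J. emeasure (M j) (F j))"
      using J F f by (subst emeasure_distr[OF meas]) (auto simp: emeasure_PiM_emb intro!: sets_PiM_I
          measurable_sets)
  qed simp
qed

lemma AE_PiM_all_components:
  assumes "\<And>i. prob_space (M i)" "\<And>i. AE x in M i. P i x"
  shows "AE \<omega> in \<Pi>\<^sub>M i\<in>(UNIV :: 'i :: countable set). M i. \<forall>i. P i (\<omega> i)"
  using assms by (subst AE_all_countable) (auto intro: AE_PiM_component)

lemma measurable_rotate_verblunsky:
  assumes "\<And>i. sets (M i) = sets borel"
  shows "rotate_verblunsky l \<in> (\<Pi>\<^sub>M i\<in>UNIV. M i) \<rightarrow>\<^sub>M (\<Pi>\<^sub>M i\<in>UNIV. M i)"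
  unfolding rotate_verblunsky_eq
proof (rule measurable_PiM_componentwise)
  show "(\<lambda>z. l ^ Suc i * z) \<in> M i \<rightarrow>\<^sub>M M i" for i
    unfolding measurable_cong_sets[OF assms assms] by (intro borel_measurable_continuous_onI continuous_intros)
qed

lemma space_seq_circ_space [simp]: "space seq_circ_space = UNIV"
  by (simp add: seq_circ_space_def space_pair_measure space_PiM PiE_UNIV_domain)

lemma measurable_seq_circ_rotate:
  "(\<lambda>(a, z). (rotate_verblunsky l a, c * z)) \<in> seq_circ_space \<rightarrow>\<^sub>M seq_circ_space"
proof -
  have "rotate_verblunsky l \<in> (\<Pi>\<^sub>M i\<in>UNIV. borel) \<rightarrow>\<^sub>M (\<Pi>\<^sub>M i\<in>UNIV. borel)"
    by (rule measurable_rotate_verblunsky) simp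
  then have "(\<lambda>p. (rotate_verblunsky l (fst p), c * snd p)) \<in> seq_circ_space \<rightarrow>\<^sub>M seq_circ_space"
    unfolding seq_circ_space_def by (intro measurable_Pair measurable_compose[OF measurable_fst]) simp_all
  then show ?thesis
    by (simp add: split_beta')
qed

lemma emeasure_mu_alpha_rotate_section:
  assumes l: "cmod l = 1" and a: "\<And>j. cmod (a j) < 1" and A: "A \<in> sets seq_circ_space"
  shows "emeasure (mu_alpha a) (Pair a -` ((\<lambda>(a, z). (rotate_verblunsky l a, cnj l * z)) -` A))
    = emeasure (mu_alpha (rotate_verblunsky l a)) (Pair (rotate_verblunsky l a) -` A)"
proof -
  interpret circle_distribution "mu_alpha a"
    using is_opuc_measure_mu_alpha[OF a] by (simp add: is_opuc_measure_iff)
  have meas: "(\<lambda>z. cnj l * z) \<in> mu_alpha a \<rightarrow>\<^sub>M borel"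
    by (intro borel_measurable_continuous continuous_intros)
  have "Pair (rotate_verblunsky l a) -` A \<in> sets borel"
    using A unfolding seq_circ_space_def by (rule sets_Pair1)
  then have "emeasure (mu_alpha (rotate_verblunsky l a)) (Pair (rotate_verblunsky l a) -` A)
      = emeasure (mu_alpha a) ((\<lambda>z. cnj l * z) -` Pair (rotate_verblunsky l a) -` A \<inter> space (mu_alpha a))"
    unfolding mu_alpha_rotate[OF l a] by (rule emeasure_distr[OF meas])
  also have "(\<lambda>z. cnj l * z) -` Pair (rotate_verblunsky l a) -` A \<inter> space (mu_alpha a)
      = Pair a -` ((\<lambda>(a, z). (rotate_verblunsky l a, cnj l * z)) -` A)"
    by auto
  finally show ?thesis ..
qed

context
  fixes M :: "nat \<Rightarrow> complex measure"
  assumes prob: "\<And>i. prob_space (M i)" and borel: "\<And>i. sets (M i) = sets borel"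
    and rotation_invariant: "\<And>i c. cmod c = 1 \<Longrightarrow> distr (M i) borel (\<lambda>z. c * z) = M i"
begin

lemma distr_PiM_rotate_verblunsky:
  assumes "cmod l = 1"
  shows "distr (\<Pi>\<^sub>M i\<in>UNIV. M i) (\<Pi>\<^sub>M i\<in>UNIV. M i) (rotate_verblunsky l) = (\<Pi>\<^sub>M i\<in>UNIV. M i)"
  unfolding rotate_verblunsky_eq
proof (rule distr_PiM_componentwise[OF prob])
  show "(\<lambda>z. l ^ Suc i * z) \<in> M i \<rightarrow>\<^sub>M M i" for i
    unfolding measurable_cong_sets[OF borel borel] by (intro borel_measurable_continuous_onI continuous_intros)
  have "cmod (l ^ Suc i) = 1" for i
    unfolding norm_power using assms by simp
  moreover have "distr (M i) (M i) (\<lambda>z. l ^ Suc i * z) = distr (M i) borel (\<lambda>z. l ^ Suc i * z)" for i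
    by (rule distr_cong) (simp_all add: borel)
  ultimately show "distr (M i) (M i) (\<lambda>z. l ^ Suc i * z) = M i" for i
    by (simp add: rotation_invariant)
qed

lemma nn_integral_rotate_verblunsky:
  assumes "cmod l = 1"
  shows "(\<integral>\<^sup>+a. f (rotate_verblunsky l a) \<partial>\<Pi>\<^sub>M i\<in>UNIV. M i) = (\<integral>\<^sup>+a. f a \<partial>\<Pi>\<^sub>M i\<in>UNIV. M i)"
proof (rule nn_integral_comp_measure_preserving_bij)
  show "distr (\<Pi>\<^sub>M i\<in>UNIV. M i) (\<Pi>\<^sub>M i\<in>UNIV. M i) (rotate_verblunsky l) = (\<Pi>\<^sub>M i\<in>UNIV. M i)"
    using assms by (rule distr_PiM_rotate_verblunsky)
  show "distr (\<Pi>\<^sub>M i\<in>UNIV. M i) (\<Pi>\<^sub>M i\<in>UNIV. M i) (rotate_verblunsky (cnj l)) = (\<Pi>\<^sub>M i\<in>UNIV. M i)"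
    using assms by (intro distr_PiM_rotate_verblunsky) simp
  show "rotate_verblunsky l (rotate_verblunsky (cnj l) a) = a" for a
    using rotate_verblunsky_cnj[of "cnj l" a] assms by simp
qed (simp_all add: measurable_rotate_verblunsky borel)

lemma AE_PiM_disc:
  assumes "\<And>i. emeasure (M i) (ball 0 1) = 1"
  shows "AE a in \<Pi>\<^sub>M i\<in>UNIV. M i. \<forall>j. cmod (a j) < 1"
proof (rule AE_PiM_all_components[OF prob])
  fix i
  interpret prob_space "M i"
    by (fact prob)
  have "AE z in M i. z \<in> ball 0 1"
    using assms[of i] borel[of i] by (subst AE_in_set_eq_1) (simp_all add: emeasure_eq_measure)
  then show "AE z in M i. cmod z < 1"
    by simp
qed

lemma nn_integral_mu_alpha_rotate_section:
  assumes disc: "\<And>i. emeasure (M i) (ball 0 1) = 1" and l: "cmod l = 1" and A: "A \<in> sets seq_circ_space"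
  shows "(\<integral>\<^sup>+a. emeasure (mu_alpha a) (Pair a -` ((\<lambda>(a, z). (rotate_verblunsky l a, cnj l * z)) -` A))
      \<partial>\<Pi>\<^sub>M i\<in>UNIV. M i) = (\<integral>\<^sup>+a. emeasure (mu_alpha a) (Pair a -` A) \<partial>\<Pi>\<^sub>M i\<in>UNIV. M i)"
proof -
  have "AE a in \<Pi>\<^sub>M i\<in>UNIV. M i.
      emeasure (mu_alpha a) (Pair a -` ((\<lambda>(a, z). (rotate_verblunsky l a, cnj l * z)) -` A))
        = emeasure (mu_alpha (rotate_verblunsky l a)) (Pair (rotate_verblunsky l a) -` A)"
    using AE_PiM_disc[OF disc] by eventually_elim (simp add: emeasure_mu_alpha_rotate_section[OF l _ A])
  then have "(\<integral>\<^sup>+a. emeasure (mu_alpha a) (Pair a -` ((\<lambda>(a, z). (rotate_verblunsky l a, cnj l * z)) -` A))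
      \<partial>\<Pi>\<^sub>M i\<in>UNIV. M i)
      = (\<integral>\<^sup>+a. emeasure (mu_alpha (rotate_verblunsky l a)) (Pair (rotate_verblunsky l a) -` A) \<partial>\<Pi>\<^sub>M i\<in>UNIV. M i)"
    by (rule nn_integral_cong_AE)
  also have "\<dots> = (\<integral>\<^sup>+a. emeasure (mu_alpha a) (Pair a -` A) \<partial>\<Pi>\<^sub>M i\<in>UNIV. M i)"
    using l by (rule nn_integral_rotate_verblunsky)
  finally show ?thesis .
qed

end

theorem mainTheorem9:
  fixes \<nu> :: "nat \<Rightarrow> complex measure" and l :: complex
  assumes "\<And>n. prob_space (\<nu> n)"
    and "\<And>n. sets (\<nu> n) = sets borel"
    and "\<And>n. emeasure (\<nu> n) (ball 0 1) = 1"
    and "\<And>n c. cmod c = 1 \<Longrightarrow> distr (\<nu> n) borel (\<lambda>z. c * z) = \<nu> n"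
    and "cmod l = 1"
  shows "distr (joint_P (\<Pi>\<^sub>M n\<in>UNIV. \<nu> n)) (joint_P (\<Pi>\<^sub>M n\<in>UNIV. \<nu> n))
           (\<lambda>(\<alpha>, z). (\<lambda>n. l ^ Suc n * \<alpha> n, cnj l * z))
         = joint_P (\<Pi>\<^sub>M n\<in>UNIV. \<nu> n)"
proof -
  let ?Q = "\<Pi>\<^sub>M n\<in>UNIV. \<nu> n" and ?T = "\<lambda>(\<alpha>, z). (rotate_verblunsky l \<alpha>, cnj l * z)"
  have "distr (joint_P ?Q) (joint_P ?Q) ?T = joint_P ?Q"
    unfolding joint_P_def
  proof (rule distr_measure_of_eq[OF measurable_seq_circ_rotate])
    fix A
    assume "A \<in> sets seq_circ_space"
    then show "(\<integral>\<^sup>+\<alpha>. emeasure (mu_alpha \<alpha>) (Pair \<alpha> -` (?T -` A \<inter> space seq_circ_space)) \<partial>?Q)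
        = (\<integral>\<^sup>+\<alpha>. emeasure (mu_alpha \<alpha>) (Pair \<alpha> -` A) \<partial>?Q)"
      using nn_integral_mu_alpha_rotate_section[of \<nu> l A] assms by simp
  qed
  then show ?thesis
    by (simp add: rotate_verblunsky_eq)
qed

end
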